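(* Let $p>2$ be a prime, $q=p^n$, $d$ a natural number with $(d,p)=1$, $\psi$ a nontrivial additive character of $\mathbb{F}_p$, and let $r,s>0$ be integers with $r+s<d$. Let $\alpha\in\mathbb{F}_{q^r}$ and $\beta\in\mathbb{F}_{q^s}$ be nonzero elements with monic minimal polynomials $g,h$ over $\mathbb{F}_q$ respectively. For a natural number $m$ let $A_m=\mathbb{F}_{q^{m/p}}$ if $p\mid m$ and $A_m=\{0\}$ if $p\nmid m$. Then, averaging over $f\in\mathcal{F}_d$ uniformly, the average of $\psi\left(\mathrm{Tr}_{\mathbb{F}_{q^r}/\mathbb{F}_p}f(\alpha)-\mathrm{Tr}_{\mathbb{F}_{q^s}/\mathbb{F}_p}f(\beta)\right)$ equals $1$ if either ($g=h$ and $p\deg g\mid r-s$) or ($\alpha\in A_r$ and $\beta\in A_s$), and equals $0$ otherwise; and the average of $\psi\left(\mathrm{Tr}_{\mathbb{F}_{q^r}/\mathbb{F}_p}f(\alpha)+\mathrm{Tr}_{\mathbb{F}_{q^s}/\mathbb{F}_p}f(\beta)\right)$ equals $1$ if either ($g=h$ and $p\deg g\mid r+s$) or ($\alpha\in A_r$ and $\beta\in A_s$), and equals $0$ otherwise.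
   Context: $\mathcal{F}_d$ denotes the set of polynomials $f=\sum_{i=0}^d a_ix^i\in\mathbb{F}_q[x]$ with $a_d\neq 0$ and $a_i=0$ for every $i\ge 0$ divisible by $p$. *)

theory Defs
  imports Complex_Main "HOL-Computational_Algebra.Polynomial"
begin

text \<open>All finite fields are realised inside one ambient finite field 'a of
characteristic p.  The subfield with Q elements (Q a power of p whose
field degree divides that of 'a) is the set of roots of x^Q - x.\<close>
definition ffield_set :: "nat \<Rightarrow> 'a::field set" where
  "ffield_set Q = {x. x ^ Q = x}"

definition tr_Fp :: "nat \<Rightarrow> nat \<Rightarrow> 'a::field \<Rightarrow> 'a" where
  "tr_Fp p k x = (\<Sum>i<k. x ^ (p ^ i))"

definition Fam :: "nat \<Rightarrow> nat \<Rightarrow> nat \<Rightarrow> 'a::field poly set" where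
  "Fam p q d = {f. degree f = d \<and> coeff f d \<noteq> 0 \<and>
       (\<forall>i. coeff f i \<in> ffield_set q) \<and> (\<forall>i. p dvd i \<longrightarrow> coeff f i = 0)}"

definition A_set :: "nat \<Rightarrow> nat \<Rightarrow> nat \<Rightarrow> 'a::field set" where
  "A_set p q m = (if p dvd m then ffield_set (q ^ (m div p)) else {0})"

definition is_min_poly :: "'a::field set \<Rightarrow> 'a \<Rightarrow> 'a poly \<Rightarrow> bool" where
  "is_min_poly S a g \<longleftrightarrow> g \<noteq> 0 \<and> lead_coeff g = 1 \<and> (\<forall>i. coeff g i \<in> S) \<and>
     poly g a = 0 \<and>
     (\<forall>h. h \<noteq> 0 \<and> (\<forall>i. coeff h i \<in> S) \<and> poly h a = 0 \<longrightarrow> degree g \<le> degree h)"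

definition nontriv_add_char :: "nat \<Rightarrow> ('a::field \<Rightarrow> complex) \<Rightarrow> bool" where
  "nontriv_add_char p \<psi> \<longleftrightarrow>
     (\<forall>x\<in>ffield_set p. \<forall>y\<in>ffield_set p. \<psi> (x + y) = \<psi> x * \<psi> y) \<and>
     (\<forall>x\<in>ffield_set p. \<psi> x \<noteq> 0) \<and>
     (\<exists>x\<in>ffield_set p. \<psi> x \<noteq> 1)"

end

theory Submission
  imports Defs "HOL-Computational_Algebra.Computational_Algebra" "HOL-Library.FuncSet"
begin

text \<open>Writing \<open>f = \<Sum> c\<^sub>i x\<^sup>i\<close>, the argument of \<open>\<psi>\<close> is the absolute trace of the
  \<open>F_q\<close>-linear form \<open>\<Sum> c\<^sub>i u\<^sub>i\<close> with \<open>u\<^sub>i = Tr(\<alpha>\<^sup>i) \<plusminus> Tr(\<beta>\<^sup>i)\<close>, the traces going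
  from \<open>F_(q^r)\<close> and \<open>F_(q^s)\<close> down to \<open>F_q\<close>. The coefficients \<open>c\<^sub>i\<close> with \<open>i < d\<close>,
  \<open>p \<nmid> i\<close> range freely over \<open>F_q\<close>, so by orthogonality of \<open>\<psi> \<circ> Tr\<close> the average is \<open>1\<close>
  when all \<open>u\<^sub>i\<close> vanish and \<open>0\<close> otherwise; since \<open>u\<^sub>p\<^sub>i = u\<^sub>i\<^sup>p\<close>, the missing coefficients
  impose nothing new. Grouping Frobenius conjugates, \<open>u\<^sub>i = \<Sum>\<^sub>y w(y) y\<^sup>i\<close> over the orbits
  of \<open>\<alpha>\<close> and \<open>\<beta>\<close>, with weight \<open>r / deg g\<close> on the first and \<open>\<plusminus>s / deg h\<close> on the second,
  read in \<open>F_p\<close>. These orbits have at most \<open>r + s < d\<close> elements, so by a Vandermonde argument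
  the \<open>u\<^sub>i\<close> all vanish iff all weights do; the orbits coincide when \<open>g = h\<close> and are disjoint
  otherwise, which turns the vanishing of the weights into the stated condition.\<close>

section \<open>Frobenius and the subfields \<open>F_Q\<close>\<close>

lemma of_nat_card_UNIV_eq_0: "of_nat (card (UNIV :: 'a::{ring_1,finite} set)) = (0 :: 'a)"
proof -
  have "(\<Sum>x\<in>UNIV. x + 1) = (\<Sum>x\<in>UNIV. (x :: 'a))"
    by (rule sum.reindex_bij_witness[of _ "\<lambda>x. x - 1" "\<lambda>x. x + 1"]) auto
  then show ?thesis
    by (simp add: sum.distrib)
qed

lemma CHAR_eq_of_card_eq_prime_power:
  assumes "prime p" and "card (UNIV :: 'a::{field,finite} set) = p ^ N"
  shows "CHAR('a) = p"
proof -
  have "prime CHAR('a)"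
    by (rule prime_CHAR_semidom) (simp add: finite_imp_CHAR_pos)
  moreover have "CHAR('a) dvd p ^ N"
    using of_nat_card_UNIV_eq_0[where 'a = 'a] assms(2) of_nat_eq_0_iff_char_dvd by metis
  ultimately show ?thesis
    using assms(1) prime_dvd_power primes_dvd_imp_eq by blast
qed

text \<open>The library's \<open>finite_field_power_card_eq_same\<close> needs the sort \<open>finite_field\<close>,
  which a type variable of sort \<open>{field,finite}\<close> does not carry.\<close>
lemma power_card_UNIV_eq_self: "(x :: 'a::{field,finite}) ^ card (UNIV :: 'a set) = x"
proof (cases "x = 0")
  case False
  define U where "U = UNIV - {0 :: 'a}"
  have "(\<Prod>y\<in>U. x * y) = (\<Prod>y\<in>U. y)"
    by (rule prod.reindex_bij_witness[of _ "\<lambda>y. y / x" "\<lambda>y. x * y"]) (use False in \<open>auto simp: U_def\<close>)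
  moreover have "(\<Prod>y\<in>U. y) \<noteq> 0"
    by (simp add: U_def)
  ultimately have "x ^ card U = 1"
    by (simp add: prod.distrib)
  moreover have "card (UNIV :: 'a set) = Suc (card U)"
    by (simp add: U_def card_Diff_singleton) (metis Suc_pred finite_UNIV_card_ge_0 finite)
  ultimately show ?thesis
    by simp
qed (simp add: power_0_left)

lemma sum_lessThan_add: "(\<Sum>j<a + (b :: nat). f j) = (\<Sum>j<a. f j) + (\<Sum>j<b. f (a + j))"
  by (induction b) (simp_all add: add_ac)

lemma sum_lessThan_mult_periodic:
  fixes g :: "nat \<Rightarrow> 'a::comm_semiring_1"
  assumes "\<And>j. g (j + k) = g j"
  shows "(\<Sum>j<k * c. g j) = of_nat c * (\<Sum>j<k. g j)"
proof (induction c)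
  case (Suc c)
  have "(\<Sum>j<k * Suc c. g j) = (\<Sum>j<k. g j) + (\<Sum>j<k * c. g (k + j))"
    by (simp add: sum_lessThan_add)
  also have "(\<Sum>j<k * c. g (k + j)) = (\<Sum>j<k * c. g j)"
    using assms by (simp add: add.commute)
  finally show ?case
    using Suc by (simp add: algebra_simps)
qed simp

lemma power_power_iter_eq_self: "(x :: 'a::comm_monoid_mult) ^ Q = x \<Longrightarrow> x ^ (Q ^ k) = x"
  by (induction k) (simp_all add: power_mult)

context
  fixes p :: nat
  assumes CHAR_p: "CHAR('a::field) = p" and prime_p: "prime p"
begin

lemma frobenius_add: "((x :: 'a) + y) ^ p ^ k = x ^ p ^ k + y ^ p ^ k"
  by (rule freshmans_dream') (use CHAR_p prime_p in auto)

lemma frobenius_sum: "(sum (f :: 'b \<Rightarrow> 'a) A) ^ p ^ k = (\<Sum>i\<in>A. f i ^ p ^ k)"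
  by (rule freshmans_dream_sum') (use CHAR_p prime_p in auto)

lemma frobenius_diff: "((x :: 'a) - y) ^ p ^ k = x ^ p ^ k - y ^ p ^ k"
  using frobenius_add[of "x - y" y k] by (simp add: algebra_simps)

lemma frobenius_minus: "(- (x :: 'a)) ^ p ^ k = - (x ^ p ^ k)"
  using frobenius_diff[of 0 x k] prime_gt_0_nat[OF prime_p] by (simp add: power_0_left)

lemma frobenius_inj: "(x :: 'a) ^ p ^ k = y ^ p ^ k \<Longrightarrow> x = y"
  using frobenius_diff[of x y k] by simp

lemma of_nat_eq_0_iff_dvd: "(of_nat m :: 'a) = 0 \<longleftrightarrow> p dvd m"
  using CHAR_p of_nat_eq_0_iff_char_dvd by blast

lemma of_int_eq_0_iff_dvd: "(of_int m :: 'a) = 0 \<longleftrightarrow> int p dvd m"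
  using CHAR_p of_int_eq_0_iff_char_dvd by blast

lemma ffield_set_add: "x \<in> ffield_set (p ^ k) \<Longrightarrow> y \<in> ffield_set (p ^ k) \<Longrightarrow> (x :: 'a) + y \<in> ffield_set (p ^ k)"
  by (simp add: ffield_set_def frobenius_add)

lemma ffield_set_diff: "x \<in> ffield_set (p ^ k) \<Longrightarrow> y \<in> ffield_set (p ^ k) \<Longrightarrow> (x :: 'a) - y \<in> ffield_set (p ^ k)"
  by (simp add: ffield_set_def frobenius_diff)

lemma ffield_set_sum:
  "(\<And>i. i \<in> A \<Longrightarrow> f i \<in> ffield_set (p ^ k)) \<Longrightarrow> sum (f :: 'b \<Rightarrow> 'a) A \<in> ffield_set (p ^ k)"
  by (simp add: ffield_set_def frobenius_sum)

lemma ffield_set_of_int_sign: "\<epsilon> = 1 \<or> \<epsilon> = -1 \<Longrightarrow> (of_int \<epsilon> :: 'a) \<in> ffield_set (p ^ k)"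
  by (auto simp: ffield_set_def frobenius_minus)

end

lemma ffield_set_0: "Q > 0 \<Longrightarrow> 0 \<in> ffield_set Q"
  by (simp add: ffield_set_def power_0_left)

lemma ffield_set_1: "1 \<in> ffield_set Q"
  by (simp add: ffield_set_def)

lemma ffield_set_mult: "x \<in> ffield_set Q \<Longrightarrow> y \<in> ffield_set Q \<Longrightarrow> (x :: 'a::field) * y \<in> ffield_set Q"
  by (simp add: ffield_set_def power_mult_distrib)

lemma ffield_set_power: "x \<in> ffield_set Q \<Longrightarrow> (x :: 'a::field) ^ i \<in> ffield_set Q"
  by (simp add: ffield_set_def flip: power_mult) (metis mult.commute power_mult)

lemma ffield_set_divide: "x \<in> ffield_set Q \<Longrightarrow> y \<in> ffield_set Q \<Longrightarrow> (x :: 'a::field) / y \<in> ffield_set Q"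
  by (simp add: ffield_set_def power_divide)

lemma ffield_set_mono: "x \<in> ffield_set Q \<Longrightarrow> x \<in> ffield_set (Q ^ k)"
  by (simp add: ffield_set_def power_power_iter_eq_self)

section \<open>Traces and additive characters\<close>

text \<open>For any \<open>Q\<close>, \<open>tr_Fp Q m\<close> is the trace from \<open>F_(Q^m)\<close> down to \<open>F_Q\<close>; it is used below
  both for the absolute trace (\<open>Q = p\<close>) and for the relative trace down to \<open>F_q\<close>.\<close>

lemma tr_Fp_mult_left: "c ^ Q = c \<Longrightarrow> tr_Fp Q m (c * (x :: 'a::field)) = c * tr_Fp Q m x"
  by (simp add: tr_Fp_def power_mult_distrib sum_distrib_left power_power_iter_eq_self)

lemma tr_Fp_0: "Q > 0 \<Longrightarrow> tr_Fp Q m (0 :: 'a::field) = 0"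
  by (simp add: tr_Fp_def power_0_left)

lemma card_tr_Fp_roots_le:
  assumes "Q \<ge> 2" and "m \<ge> 1"
  shows "card {x :: 'a::{field,finite}. tr_Fp Q m x = 0} \<le> Q ^ (m - 1)"
proof -
  define P :: "'a poly" where "P = (\<Sum>j<m. monom 1 (Q ^ j))"
  have poly_P: "poly P x = tr_Fp Q m x" for x
    by (simp add: P_def tr_Fp_def poly_sum poly_monom)
  have coeff_P: "coeff P i = (\<Sum>j<m. if Q ^ j = i then 1 else 0)" for i
    by (simp add: P_def coeff_sum coeff_monom)
  have "coeff P (Q ^ (m - 1)) = 1"
    using assms by (simp add: coeff_P)
  then have "P \<noteq> 0"
    by auto
  moreover have "degree P \<le> Q ^ (m - 1)"
  proof (rule degree_le, intro allI impI)
    fix i assume "Q ^ (m - 1) < i"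
    moreover have "Q ^ j \<le> Q ^ (m - 1)" if "j < m" for j
      using that assms by (intro power_increasing) auto
    ultimately show "coeff P i = 0"
      unfolding coeff_P by (intro sum.neutral) force
  qed
  ultimately show ?thesis
    using card_poly_roots_bound[of P] by (simp add: poly_P)
qed

context
  fixes p :: nat
  assumes CHAR_p: "CHAR('a::field) = p" and prime_p: "prime p"
begin

lemma tr_Fp_add: "tr_Fp (p ^ k) m ((x :: 'a) + y) = tr_Fp (p ^ k) m x + tr_Fp (p ^ k) m y"
  using frobenius_add[OF CHAR_p prime_p]
  by (simp add: tr_Fp_def sum.distrib flip: power_mult)

lemma tr_Fp_sum: "tr_Fp (p ^ k) m (\<Sum>i\<in>A. (f i :: 'a)) = (\<Sum>i\<in>A. tr_Fp (p ^ k) m (f i))"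
  by (simp add: tr_Fp_def frobenius_sum[OF CHAR_p prime_p] flip: power_mult) (rule sum.swap)

lemma tr_Fp_power_p: "tr_Fp (p ^ k) m (x :: 'a) ^ p = tr_Fp (p ^ k) m (x ^ p)"
proof -
  have "tr_Fp (p ^ k) m x ^ p = (\<Sum>j<m. (x ^ (p ^ k) ^ j) ^ p)"
    using frobenius_sum[OF CHAR_p prime_p, of "\<lambda>j. x ^ (p ^ k) ^ j" "{..<m}" 1] by (simp add: tr_Fp_def)
  also have "\<dots> = tr_Fp (p ^ k) m (x ^ p)"
    by (simp add: tr_Fp_def mult.commute flip: power_mult)
  finally show ?thesis .
qed

lemma tr_Fp_in_ffield_set:
  assumes "(x :: 'a) ^ ((p ^ k) ^ m) = x"
  shows "tr_Fp (p ^ k) m x \<in> ffield_set (p ^ k)"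
proof -
  have "tr_Fp (p ^ k) m x ^ p ^ k = (\<Sum>j<m. x ^ ((p ^ k) ^ Suc j))"
    by (simp add: tr_Fp_def frobenius_sum[OF CHAR_p prime_p] mult.commute flip: power_mult)
  also have "\<dots> = (\<Sum>j<Suc m. x ^ ((p ^ k) ^ j)) - x"
    by (subst sum.lessThan_Suc_shift) simp
  also have "\<dots> = tr_Fp (p ^ k) m x"
    using assms by (simp add: tr_Fp_def)
  finally show ?thesis
    by (simp add: ffield_set_def)
qed

lemma tr_Fp_tower: "tr_Fp (p ^ k) (a * b) (y :: 'a) = tr_Fp (p ^ k) a (tr_Fp ((p ^ k) ^ a) b y)"
proof (induction b)
  case 0
  then show ?case
    using prime_gt_0_nat[OF prime_p] by (simp add: tr_Fp_def power_0_left)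
next
  case (Suc b)
  have last_term: "tr_Fp ((p ^ k) ^ a) (Suc b) y = tr_Fp ((p ^ k) ^ a) b y + y ^ ((p ^ k) ^ a) ^ b"
    by (simp add: tr_Fp_def)
  have "tr_Fp (p ^ k) (a * Suc b) y = tr_Fp (p ^ k) (a * b) y + (\<Sum>j<a. y ^ ((p ^ k) ^ (a * b + j)))"
    unfolding tr_Fp_def by (simp add: sum_lessThan_add add.commute[of a])
  also have "(\<Sum>j<a. y ^ ((p ^ k) ^ (a * b + j))) = tr_Fp (p ^ k) a (y ^ (((p ^ k) ^ a) ^ b))"
    by (simp add: tr_Fp_def power_add mult.assoc flip: power_mult)
  finally show ?case
    by (simp add: Suc last_term tr_Fp_add)
qed

lemma tr_Fp_in_prime_field: "(x :: 'a) \<in> ffield_set (p ^ n) \<Longrightarrow> tr_Fp p n x \<in> ffield_set p"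
  using tr_Fp_in_ffield_set[of x 1 n] by (simp add: ffield_set_def)

lemma tr_Fp_frobenius_diff: "tr_Fp (p ^ k) m ((x :: 'a) ^ p ^ k - x) = x ^ (p ^ k) ^ m - x"
proof -
  have "tr_Fp (p ^ k) m (x ^ p ^ k - x) = (\<Sum>j<m. x ^ (p ^ k) ^ Suc j - x ^ (p ^ k) ^ j)"
    unfolding tr_Fp_def by (simp add: frobenius_diff[OF CHAR_p prime_p] mult.commute flip: power_mult)
  also have "\<dots> = x ^ (p ^ k) ^ m - x"
    using sum_lessThan_telescope[of "\<lambda>j. x ^ (p ^ k) ^ j" m] by (simp only: power_0 power_one_right)
  finally show ?thesis .
qed

lemma frobenius_diff_eq_imp_diff_in_ffield_set:
  "(x :: 'a) ^ p ^ k - x = y ^ p ^ k - y \<Longrightarrow> x - y \<in> ffield_set (p ^ k)"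
  by (simp add: ffield_set_def frobenius_diff[OF CHAR_p prime_p] algebra_simps)

end

lemma nontriv_add_char_0: "nontriv_add_char p \<psi> \<Longrightarrow> p > 0 \<Longrightarrow> \<psi> (0 :: 'a::field) = 1"
  unfolding nontriv_add_char_def using ffield_set_0[of p] by (metis add_0 mult_cancel_right2)

context
  fixes p n N :: nat
  assumes CHAR_p: "CHAR('a::{field,finite}) = p" and prime_p: "prime p"
    and card_UNIV: "card (UNIV :: 'a set) = p ^ N" and n_dvd_N: "n dvd N" and n_pos: "n > 0"
begin

text \<open>The map \<open>x \<mapsto> x^q - x\<close> has fibres of size at most \<open>|F_q|\<close> and takes its values among
  the at most \<open>q^(m-1)\<close> roots of the trace to \<open>F_q\<close>, where \<open>q^m = p^N\<close>.\<close>
lemma card_ffield_set_ge: "p ^ n \<le> card (ffield_set (p ^ n) :: 'a set)"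
proof -
  define Q where "Q = p ^ n"
  define m where "m = N div n"
  define \<phi> :: "'a \<Rightarrow> 'a" where "\<phi> x = x ^ Q - x" for x
  have Q_ge_2: "Q \<ge> 2"
    using prime_ge_2_nat[OF prime_p] self_le_power[of p n] n_pos unfolding Q_def by linarith
  have card_Q_m: "Q ^ m = card (UNIV :: 'a set)"
    using card_UNIV n_dvd_N by (simp add: Q_def m_def flip: power_mult)
  moreover have "card {0, 1 :: 'a} \<le> card (UNIV :: 'a set)"
    by (rule card_mono) simp_all
  ultimately have m_pos: "m \<ge> 1"
    by (cases m) auto
  have "range \<phi> \<subseteq> {y. tr_Fp Q m y = 0}"
    using tr_Fp_frobenius_diff[OF CHAR_p prime_p] power_card_UNIV_eq_self card_Q_m
    by (auto simp: \<phi>_def Q_def)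
  then have "card (range \<phi>) \<le> card {y :: 'a. tr_Fp Q m y = 0}"
    by (intro card_mono) simp_all
  then have card_range: "card (range \<phi>) \<le> Q ^ (m - 1)"
    using card_tr_Fp_roots_le[OF Q_ge_2 m_pos] by (rule order_trans)
  have card_fibre: "card (\<phi> -` {\<phi> x0}) \<le> card (ffield_set Q :: 'a set)" for x0
  proof -
    have "\<phi> -` {\<phi> x0} \<subseteq> (\<lambda>c. x0 + c) ` ffield_set Q"
    proof
      fix x assume "x \<in> \<phi> -` {\<phi> x0}"
      then have "x - x0 \<in> ffield_set Q"
        using frobenius_diff_eq_imp_diff_in_ffield_set[OF CHAR_p prime_p] by (simp add: \<phi>_def Q_def)
      then show "x \<in> (\<lambda>c. x0 + c) ` ffield_set Q"
        by (rule rev_image_eqI) simp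
    qed
    then have "card (\<phi> -` {\<phi> x0}) \<le> card ((\<lambda>c. x0 + c) ` ffield_set Q)"
      by (intro card_mono) simp_all
    also have "\<dots> \<le> card (ffield_set Q :: 'a set)"
      by (rule card_image_le) simp
    finally show ?thesis .
  qed
  have "Q ^ (m - 1) * Q = card (UNIV :: 'a set)"
    using power_minus_mult[of m Q] m_pos card_Q_m by simp
  also have "card (UNIV :: 'a set) = card (\<Union>y\<in>range \<phi>. \<phi> -` {y})"
    by (rule arg_cong[where f = card]) auto
  also have "\<dots> \<le> (\<Sum>y\<in>range \<phi>. card (\<phi> -` {y}))"
    by (rule card_UN_le) simp
  also have "\<dots> \<le> card (range \<phi>) * card (ffield_set Q :: 'a set)"
    using sum_bounded_above[of "range \<phi>" "\<lambda>y. card (\<phi> -` {y})"] card_fibre by auto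
  also have "\<dots> \<le> Q ^ (m - 1) * card (ffield_set Q :: 'a set)"
    using card_range by simp
  finally show ?thesis
    unfolding Q_def[symmetric] using Q_ge_2 by simp
qed

lemma tr_Fp_surj:
  assumes "x \<in> ffield_set p"
  shows "\<exists>a \<in> ffield_set (p ^ n). tr_Fp p n (a :: 'a) = x"
proof -
  have "card {a :: 'a. tr_Fp p n a = 0} \<le> p ^ (n - 1)"
    using n_pos prime_ge_2_nat[OF prime_p] by (intro card_tr_Fp_roots_le) auto
  also have "\<dots> < p ^ n"
    using n_pos prime_gt_1_nat[OF prime_p] by (intro power_strict_increasing) auto
  also have "\<dots> \<le> card (ffield_set (p ^ n) :: 'a set)"
    by (fact card_ffield_set_ge)
  finally have "\<not> ffield_set (p ^ n) \<subseteq> {a :: 'a. tr_Fp p n a = 0}"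
    using card_mono[of "{a :: 'a. tr_Fp p n a = 0}" "ffield_set (p ^ n)"] by auto
  then obtain b :: 'a where b: "b \<in> ffield_set (p ^ n)" "tr_Fp p n b \<noteq> 0"
    by blast
  define c where "c = x / tr_Fp p n b"
  have c: "c \<in> ffield_set p"
    using assms b tr_Fp_in_prime_field[OF CHAR_p prime_p] by (simp add: c_def ffield_set_divide)
  have "c * b \<in> ffield_set (p ^ n)"
    using ffield_set_mono[OF c, of n] b by (simp add: ffield_set_mult)
  moreover have "tr_Fp p n (c * b) = x"
    using tr_Fp_mult_left[of c p] c b by (simp add: ffield_set_def c_def)
  ultimately show ?thesis
    by blast
qed

lemma sum_add_char_tr_Fp:
  assumes \<psi>: "nontriv_add_char p \<psi>" and u: "(u :: 'a) \<in> ffield_set (p ^ n)"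
  shows "(\<Sum>a\<in>ffield_set (p ^ n). \<psi> (tr_Fp p n (a * u))) =
           (if u = 0 then of_nat (card (ffield_set (p ^ n) :: 'a set)) else 0)"
proof (cases "u = 0")
  case True
  then show ?thesis
    using nontriv_add_char_0[OF \<psi>] prime_gt_0_nat[OF prime_p] by (simp add: tr_Fp_0)
next
  case False
  define F where "F = (ffield_set (p ^ n) :: 'a set)"
  define S where "S = (\<Sum>a\<in>F. \<psi> (tr_Fp p n (a * u)))"
  obtain x where x: "x \<in> ffield_set p" "\<psi> x \<noteq> 1"
    using \<psi> unfolding nontriv_add_char_def by blast
  obtain a0 where a0: "a0 \<in> F" "tr_Fp p n a0 = x"
    using tr_Fp_surj[OF x(1)] unfolding F_def by blast
  have a1: "a0 / u \<in> F"
    using a0 u by (simp add: F_def ffield_set_divide)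
  have tr_in: "tr_Fp p n (a * u) \<in> ffield_set p" if "a \<in> F" for a
    using that u by (intro tr_Fp_in_prime_field[OF CHAR_p prime_p]) (simp add: F_def ffield_set_mult)
  have "S = (\<Sum>a\<in>F. \<psi> (tr_Fp p n ((a + a0 / u) * u)))"
    unfolding S_def
    by (rule sum.reindex_bij_witness[of _ "\<lambda>a. a + a0 / u" "\<lambda>a. a - a0 / u"])
       (use a1 in \<open>auto simp: F_def intro: ffield_set_add[OF CHAR_p prime_p] ffield_set_diff[OF CHAR_p prime_p]\<close>)
  also have "\<dots> = (\<Sum>a\<in>F. \<psi> (tr_Fp p n (a * u)) * \<psi> x)"
    using tr_Fp_add[OF CHAR_p prime_p, of 1] \<psi> tr_in x(1) a0(2) False
    by (intro sum.cong refl) (simp add: distrib_right nontriv_add_char_def)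
  also have "\<dots> = S * \<psi> x"
    by (simp add: S_def sum_distrib_right)
  finally have "S * (1 - \<psi> x) = 0"
    by (simp add: algebra_simps)
  then show ?thesis
    using x(2) False by (simp add: S_def F_def)
qed

end

section \<open>Frobenius orbits and minimal polynomials\<close>

definition frob_period :: "nat \<Rightarrow> 'a::field \<Rightarrow> nat" where
  "frob_period Q x = (LEAST k. k > 0 \<and> x ^ Q ^ k = x)"

definition frob_orbit :: "nat \<Rightarrow> 'a::field \<Rightarrow> 'a set" where
  "frob_orbit Q x = (\<lambda>j. x ^ Q ^ j) ` {..<frob_period Q x}"

lemma power_power_power_add: "((x :: 'a::comm_monoid_mult) ^ Q ^ a) ^ Q ^ b = x ^ Q ^ (a + b)"
  by (simp add: power_add power_mult)

lemma power_power_mod_eq: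
  assumes "(x :: 'a::comm_monoid_mult) ^ Q ^ k = x"
  shows "x ^ Q ^ j = x ^ Q ^ (j mod k)"
proof -
  have "x ^ Q ^ (k * (j div k)) = x"
    using power_power_iter_eq_self[of x "Q ^ k" "j div k"] assms by (simp add: power_mult)
  then show ?thesis
    using power_power_power_add[of x Q "k * (j div k)" "j mod k"] by simp
qed

context
  fixes Q t :: nat and x :: "'a::field"
  assumes t_pos: "t > 0" and periodic: "x ^ Q ^ t = x"
begin

lemma frob_period_pos: "frob_period Q x > 0"
  and frob_period_fix: "x ^ Q ^ frob_period Q x = x"
  and frob_period_le: "frob_period Q x \<le> t"
  using LeastI[of "\<lambda>k. k > 0 \<and> x ^ Q ^ k = x" t] Least_le[of "\<lambda>k. k > 0 \<and> x ^ Q ^ k = x" t]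
    t_pos periodic
  by (simp_all add: frob_period_def)

lemma frob_period_dvd_iff: "x ^ Q ^ j = x \<longleftrightarrow> frob_period Q x dvd j"
proof
  assume fix_j: "x ^ Q ^ j = x"
  show "frob_period Q x dvd j"
  proof (rule ccontr)
    assume "\<not> frob_period Q x dvd j"
    then have "j mod frob_period Q x > 0" and "j mod frob_period Q x < frob_period Q x"
      using frob_period_pos by (simp_all add: mod_greater_zero_iff_not_dvd)
    moreover have "x ^ Q ^ (j mod frob_period Q x) = x"
      using power_power_mod_eq[OF frob_period_fix, of j] fix_j by simp
    ultimately show False
      using Least_le[of "\<lambda>k. k > 0 \<and> x ^ Q ^ k = x" "j mod frob_period Q x"]
      by (simp add: frob_period_def)
  qed
next
  assume "frob_period Q x dvd j"
  then show "x ^ Q ^ j = x"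
    using power_power_iter_eq_self[OF frob_period_fix] by (auto simp: power_mult)
qed

lemma mem_frob_orbit_iff: "y \<in> frob_orbit Q x \<longleftrightarrow> (\<exists>j. y = x ^ Q ^ j)"
proof
  assume "\<exists>j. y = x ^ Q ^ j"
  then obtain j where "y = x ^ Q ^ (j mod frob_period Q x)"
    using power_power_mod_eq[OF frob_period_fix] by blast
  then show "y \<in> frob_orbit Q x"
    using frob_period_pos unfolding frob_orbit_def by (intro rev_image_eqI[of "j mod frob_period Q x"]) auto
qed (auto simp: frob_orbit_def)

lemma frob_orbit_self: "x \<in> frob_orbit Q x"
  using mem_frob_orbit_iff[of x] by (metis power_0 power_one_right)

end

lemma frob_orbit_eq_of_mem:
  assumes t_pos: "t > 0" and periodic: "(x :: 'a::field) ^ Q ^ t = x" and "y \<in> frob_orbit Q x"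
  shows "frob_orbit Q y = frob_orbit Q x"
proof -
  obtain c where y: "y = x ^ Q ^ c"
    using assms mem_frob_orbit_iff by blast
  have "y ^ Q ^ t = (x ^ Q ^ t) ^ Q ^ c"
    by (simp add: y power_power_power_add add.commute)
  then have y_periodic: "y ^ Q ^ t = y"
    by (simp add: periodic y)
  obtain k where k: "frob_period Q x = Suc k"
    using frob_period_pos[OF t_pos periodic] not0_implies_Suc by blast
  have x_from_y: "x ^ Q ^ j = y ^ Q ^ (k * c + j)" for j
  proof -
    have "x ^ Q ^ (frob_period Q x * c + j) = x ^ Q ^ j"
      using frob_period_dvd_iff[OF t_pos periodic, of "frob_period Q x * c"] by (simp flip: power_power_power_add)
    then show ?thesis
      by (simp add: y k power_power_power_add add.assoc)
  qed
  show ?thesis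
  proof (intro set_eqI iffI)
    fix z assume "z \<in> frob_orbit Q y"
    then obtain j where "z = y ^ Q ^ j"
      using mem_frob_orbit_iff[OF t_pos y_periodic] by blast
    then show "z \<in> frob_orbit Q x"
      using mem_frob_orbit_iff[OF t_pos periodic] by (auto simp: y power_power_power_add)
  next
    fix z assume "z \<in> frob_orbit Q x"
    then obtain j where "z = x ^ Q ^ j"
      using mem_frob_orbit_iff[OF t_pos periodic] by blast
    then show "z \<in> frob_orbit Q y"
      using mem_frob_orbit_iff[OF t_pos y_periodic] x_from_y by blast
  qed
qed

context
  fixes p n :: nat
  assumes CHAR_p: "CHAR('a::field) = p" and prime_p: "prime p"
begin

context
  fixes t :: nat and x :: 'a
  assumes t_pos: "t > 0" and periodic: "x ^ (p ^ n) ^ t = x"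
begin

lemma inj_on_frob_orbit: "inj_on (\<lambda>j. x ^ (p ^ n) ^ j) {..<frob_period (p ^ n) x}"
proof (rule inj_onI)
  have inj: "i = j" if "i \<le> j" "j < frob_period (p ^ n) x" "x ^ (p ^ n) ^ i = x ^ (p ^ n) ^ j" for i j
  proof -
    have "(x ^ (p ^ n) ^ (j - i)) ^ (p ^ n) ^ i = x ^ (p ^ n) ^ i"
      using that power_power_power_add[of x "p ^ n" "j - i" i] by simp
    then have "x ^ (p ^ n) ^ (j - i) = x"
      by (rule frobenius_inj[OF CHAR_p prime_p, of _ "n * i", unfolded power_mult])
    then have "frob_period (p ^ n) x dvd j - i"
      using frob_period_dvd_iff[OF t_pos periodic] by simp
    moreover have "j - i < frob_period (p ^ n) x"
      using that by linarith
    ultimately have "j - i = 0"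
      by (meson nat_dvd_not_less not_gr0)
    then show "i = j"
      using that by simp
  qed
  fix i j assume "i \<in> {..<frob_period (p ^ n) x}" "j \<in> {..<frob_period (p ^ n) x}"
    "x ^ (p ^ n) ^ i = x ^ (p ^ n) ^ j"
  then show "i = j"
    using inj[of i j] inj[of j i] by (cases "i \<le> j") auto
qed

lemma card_frob_orbit: "card (frob_orbit (p ^ n) x) = frob_period (p ^ n) x"
  using card_image[OF inj_on_frob_orbit] by (simp add: frob_orbit_def)

lemma tr_Fp_power_eq_orbit_sum:
  "tr_Fp (p ^ n) t (x ^ i) = of_nat (t div frob_period (p ^ n) x) * (\<Sum>y\<in>frob_orbit (p ^ n) x. y ^ i)"
proof -
  define k where "k = frob_period (p ^ n) x"
  have "k dvd t"
    using frob_period_dvd_iff[OF t_pos periodic] periodic by (simp add: k_def)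
  then have t: "t = k * (t div k)"
    by simp
  have "tr_Fp (p ^ n) t (x ^ i) = (\<Sum>j<t. (x ^ (p ^ n) ^ j) ^ i)"
    by (simp add: tr_Fp_def mult.commute flip: power_mult)
  also have "\<dots> = of_nat (t div k) * (\<Sum>j<k. (x ^ (p ^ n) ^ j) ^ i)"
  proof (subst t, intro sum_lessThan_mult_periodic)
    fix j
    show "(x ^ (p ^ n) ^ (j + k)) ^ i = (x ^ (p ^ n) ^ j) ^ i"
      using power_power_mod_eq[OF frob_period_fix[OF t_pos periodic], of "j + k"]
        power_power_mod_eq[OF frob_period_fix[OF t_pos periodic], of j]
      by (simp add: k_def)
  qed
  also have "(\<Sum>j<k. (x ^ (p ^ n) ^ j) ^ i) = (\<Sum>y\<in>frob_orbit (p ^ n) x. y ^ i)"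
    unfolding frob_orbit_def k_def by (simp add: sum.reindex[OF inj_on_frob_orbit])
  finally show ?thesis
    by (simp add: k_def)
qed

end

end

definition orbit_poly :: "nat \<Rightarrow> 'a::field \<Rightarrow> 'a poly" where
  "orbit_poly Q x = (\<Prod>y\<in>frob_orbit Q x. [:- y, 1:])"

lemma orbit_poly_nonzero: "orbit_poly Q x \<noteq> 0"
  by (simp add: orbit_poly_def frob_orbit_def)

lemma degree_orbit_poly: "degree (orbit_poly Q x) = card (frob_orbit Q x)"
  by (simp add: orbit_poly_def frob_orbit_def degree_prod_eq_sum_degree)

lemma poly_orbit_poly_eq_0_iff: "poly (orbit_poly Q x) y = 0 \<longleftrightarrow> y \<in> frob_orbit Q x"
  by (simp add: orbit_poly_def frob_orbit_def poly_prod)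

context
  fixes p :: nat
  assumes CHAR_p: "CHAR('a::field) = p" and prime_p: "prime p"
begin

lemma poly_frobenius:
  assumes "\<forall>i. coeff g i \<in> ffield_set (p ^ n)"
  shows "poly g ((y :: 'a) ^ (p ^ n) ^ j) = poly g y ^ (p ^ n) ^ j"
proof -
  have coeff_fix: "coeff g i ^ (p ^ n) ^ j = coeff g i" for i
    using assms power_power_iter_eq_self[of "coeff g i" "p ^ n" j] by (simp add: ffield_set_def)
  have "poly g y ^ (p ^ n) ^ j = (\<Sum>i\<le>degree g. (coeff g i * y ^ i) ^ (p ^ n) ^ j)"
    unfolding poly_altdef by (rule frobenius_sum[OF CHAR_p prime_p, of _ _ "n * j", unfolded power_mult])
  also have "\<dots> = (\<Sum>i\<le>degree g. coeff g i * (y ^ (p ^ n) ^ j) ^ i)"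
  proof (rule sum.cong[OF refl])
    fix i
    show "(coeff g i * y ^ i) ^ (p ^ n) ^ j = coeff g i * (y ^ (p ^ n) ^ j) ^ i"
      by (simp only: power_mult_distrib coeff_fix) (metis power_mult mult.commute)
  qed
  finally show ?thesis
    by (simp add: poly_altdef)
qed

lemma map_poly_frobenius_mult:
  "map_poly (\<lambda>c. c ^ p ^ k) (a * b) = map_poly (\<lambda>c. c ^ p ^ k) a * map_poly (\<lambda>c. (c :: 'a) ^ p ^ k) b"
  using prime_gt_0_nat[OF prime_p]
  by (intro poly_eqI) (simp add: coeff_map_poly coeff_mult frobenius_sum[OF CHAR_p prime_p] power_mult_distrib)

lemma map_poly_frobenius_prod_linear:
  assumes "finite A"
  shows "map_poly (\<lambda>c. c ^ p ^ k) (\<Prod>y\<in>A. [:- y, 1:]) = (\<Prod>y\<in>A. [:- ((y :: 'a) ^ p ^ k), 1:])"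
  using assms
proof (induction A rule: finite_induct)
  case (insert z A)
  have "map_poly (\<lambda>c. c ^ p ^ k) [:- z, 1:] = [:- (z ^ p ^ k), 1:]"
    using prime_gt_0_nat[OF prime_p] by (simp add: map_poly_pCons frobenius_minus[OF CHAR_p prime_p])
  then show ?case
    using insert by (simp only: prod.insert[OF insert(1,2)] map_poly_frobenius_mult)
qed simp

lemma coeff_orbit_poly_in_ffield_set:
  assumes "t > 0" and "(x :: 'a) ^ (p ^ n) ^ t = x"
  shows "coeff (orbit_poly (p ^ n) x) i \<in> ffield_set (p ^ n)"
proof -
  define Orb where "Orb = frob_orbit (p ^ n) x"
  have frob_O: "(\<lambda>y. y ^ p ^ n) ` Orb = Orb"
  proof -
    have "(x ^ (p ^ n) ^ j) ^ p ^ n = x ^ (p ^ n) ^ Suc j" for j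
      by (simp only: power_Suc2 power_mult)
    then have "(\<lambda>y. y ^ p ^ n) ` Orb \<subseteq> Orb"
      using mem_frob_orbit_iff[OF assms] unfolding Orb_def by (metis image_subsetI)
    moreover have "inj_on (\<lambda>y. y ^ p ^ n) Orb"
      by (auto intro: inj_onI frobenius_inj[OF CHAR_p prime_p])
    ultimately show ?thesis
      by (simp add: card_subset_eq card_image Orb_def frob_orbit_def)
  qed
  have "map_poly (\<lambda>c. c ^ p ^ n) (orbit_poly (p ^ n) x) = (\<Prod>y\<in>Orb. [:- (y ^ p ^ n), 1:])"
    by (simp add: orbit_poly_def Orb_def frob_orbit_def map_poly_frobenius_prod_linear)
  also have "\<dots> = orbit_poly (p ^ n) x"
    using prod.reindex[of "\<lambda>y. y ^ p ^ n" Orb "\<lambda>z. [:- z, 1:]"] frob_O frobenius_inj[OF CHAR_p prime_p]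
    by (simp add: orbit_poly_def Orb_def inj_on_def)
  finally have "map_poly (\<lambda>c. c ^ p ^ n) (orbit_poly (p ^ n) x) = orbit_poly (p ^ n) x" .
  then have "coeff (orbit_poly (p ^ n) x) i ^ p ^ n = coeff (orbit_poly (p ^ n) x) i"
    using coeff_map_poly[of "\<lambda>c. c ^ p ^ n" "orbit_poly (p ^ n) x" i] prime_gt_0_nat[OF prime_p]
    by (simp add: power_0_left)
  then show ?thesis
    by (simp add: ffield_set_def)
qed

end

lemma is_min_poly_unique:
  assumes g: "is_min_poly S x g" and h: "is_min_poly S x h"
    and S_diff: "\<And>a b. a \<in> S \<Longrightarrow> b \<in> S \<Longrightarrow> a - b \<in> S"
  shows "g = h"
proof (rule ccontr)
  assume "g \<noteq> h"
  have deg: "degree g = degree h"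
    using g h unfolding is_min_poly_def by (meson antisym)
  have "degree g \<le> degree (g - h)"
    using g h \<open>g \<noteq> h\<close> S_diff unfolding is_min_poly_def by auto
  moreover have "coeff (g - h) (degree g) = 0"
    using g h deg unfolding is_min_poly_def by simp
  moreover have "degree (g - h) \<le> degree g"
    using degree_diff_le[of g "degree g" h] deg by simp
  ultimately show False
    using \<open>g \<noteq> h\<close> by (metis antisym eq_iff_diff_eq_0 leading_coeff_0_iff)
qed

context
  fixes p n :: nat
  assumes CHAR_p: "CHAR('a::field) = p" and prime_p: "prime p"
begin

context
  fixes t :: nat and x :: 'a and g :: "'a poly"
  assumes t_pos: "t > 0" and periodic: "x ^ (p ^ n) ^ t = x"
    and min_poly: "is_min_poly (ffield_set (p ^ n)) x g"
begin

lemma min_poly_frob_orbit_root: "y \<in> frob_orbit (p ^ n) x \<Longrightarrow> poly g y = 0"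
  using min_poly mem_frob_orbit_iff[OF t_pos periodic] poly_frobenius[OF CHAR_p prime_p]
    prime_gt_0_nat[OF prime_p]
  by (auto simp: is_min_poly_def power_0_left)

lemma degree_min_poly: "degree g = frob_period (p ^ n) x"
proof (rule antisym)
  have "degree g \<le> degree (orbit_poly (p ^ n) x)"
    using min_poly orbit_poly_nonzero coeff_orbit_poly_in_ffield_set[OF CHAR_p prime_p t_pos periodic]
      poly_orbit_poly_eq_0_iff frob_orbit_self[OF t_pos periodic]
    unfolding is_min_poly_def by blast
  then show "degree g \<le> frob_period (p ^ n) x"
    by (simp add: degree_orbit_poly card_frob_orbit[OF CHAR_p prime_p t_pos periodic])
next
  have "card (frob_orbit (p ^ n) x) \<le> card {y. poly g y = 0}"
    using min_poly_frob_orbit_root poly_roots_finite[of g] min_poly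
    by (intro card_mono) (auto simp: is_min_poly_def)
  also have "\<dots> \<le> degree g"
    using min_poly card_poly_roots_bound[of g] by (simp add: is_min_poly_def)
  finally show "frob_period (p ^ n) x \<le> degree g"
    by (simp add: card_frob_orbit[OF CHAR_p prime_p t_pos periodic])
qed

lemma min_poly_root_iff: "poly g y = 0 \<longleftrightarrow> y \<in> frob_orbit (p ^ n) x"
proof
  assume root: "poly g y = 0"
  show "y \<in> frob_orbit (p ^ n) x"
  proof (rule ccontr)
    assume y: "y \<notin> frob_orbit (p ^ n) x"
    have "card (insert y (frob_orbit (p ^ n) x)) \<le> card {y. poly g y = 0}"
      using min_poly_frob_orbit_root root poly_roots_finite[of g] min_poly
      by (intro card_mono) (auto simp: is_min_poly_def)
    also have "\<dots> \<le> degree g"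
      using min_poly card_poly_roots_bound[of g] by (simp add: is_min_poly_def)
    finally show False
      using y degree_min_poly card_frob_orbit[OF CHAR_p prime_p t_pos periodic] by (simp add: frob_orbit_def)
  qed
qed (rule min_poly_frob_orbit_root)

end

lemma min_poly_eq_iff_frob_orbit_eq:
  assumes x: "t > 0" "(x :: 'a) ^ (p ^ n) ^ t = x" and y: "t' > 0" "y ^ (p ^ n) ^ t' = y"
    and g: "is_min_poly (ffield_set (p ^ n)) x g" and h: "is_min_poly (ffield_set (p ^ n)) y h"
  shows "g = h \<longleftrightarrow> frob_orbit (p ^ n) x = frob_orbit (p ^ n) y"
proof
  assume "g = h"
  then have "y \<in> frob_orbit (p ^ n) x"
    using h min_poly_root_iff[OF x g] by (simp add: is_min_poly_def)
  then show "frob_orbit (p ^ n) x = frob_orbit (p ^ n) y"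
    using frob_orbit_eq_of_mem[OF x] by simp
next
  assume orbits: "frob_orbit (p ^ n) x = frob_orbit (p ^ n) y"
  have "degree g = degree h"
    using orbits degree_min_poly[OF x g] degree_min_poly[OF y h]
      card_frob_orbit[OF CHAR_p prime_p x] card_frob_orbit[OF CHAR_p prime_p y]
    by simp
  moreover have "poly g y = 0"
    using orbits frob_orbit_self[OF y] min_poly_root_iff[OF x g] by simp
  ultimately have "is_min_poly (ffield_set (p ^ n)) y g"
    using g h unfolding is_min_poly_def by simp
  then show "g = h"
    using h ffield_set_diff[OF CHAR_p prime_p] by (rule is_min_poly_unique)
qed

lemma frob_orbits_disjoint:
  assumes x: "t > 0" "(x :: 'a) ^ (p ^ n) ^ t = x" and y: "t' > 0" "y ^ (p ^ n) ^ t' = y"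
    and g: "is_min_poly (ffield_set (p ^ n)) x g" and h: "is_min_poly (ffield_set (p ^ n)) y h"
    and "g \<noteq> h"
  shows "frob_orbit (p ^ n) x \<inter> frob_orbit (p ^ n) y = {}"
  using frob_orbit_eq_of_mem[OF x] frob_orbit_eq_of_mem[OF y] min_poly_eq_iff_frob_orbit_eq[OF x y g h]
    \<open>g \<noteq> h\<close>
  by blast

end

section \<open>The coefficients of the linear form\<close>

lemma weights_eq_0_of_power_sums_eq_0:
  fixes X :: "'a::field set" and w :: "'a \<Rightarrow> 'a"
  assumes fin: "finite X" and X_nonzero: "0 \<notin> X"
    and power_sums: "\<And>i. 1 \<le> i \<Longrightarrow> i \<le> card X \<Longrightarrow> (\<Sum>x\<in>X. w x * x ^ i) = 0"
    and x0: "x0 \<in> X"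
  shows "w x0 = 0"
proof -
  define R where "R = (\<Prod>y\<in>X - {x0}. [:- y, 1:])"
  define P where "P = pCons 0 R"
  have R_nonzero: "R \<noteq> 0"
    using fin by (simp add: R_def)
  have R_roots: "poly R x = 0 \<longleftrightarrow> x \<in> X - {x0}" for x
    using fin by (simp add: R_def poly_prod)
  have "degree R = card X - 1"
    using fin x0 by (simp add: R_def degree_prod_eq_sum_degree)
  then have degree_P: "degree P = card X"
    using R_nonzero fin x0 by (simp add: P_def) (metis card_0_eq empty_iff Suc_pred neq0_conv)
  have "(\<Sum>x\<in>X. w x * poly P x) = (\<Sum>i\<le>card X. coeff P i * (\<Sum>x\<in>X. w x * x ^ i))"
    unfolding poly_altdef degree_P
    by (simp add: sum_distrib_left sum_distrib_right mult_ac) (rule sum.swap)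
  also have "\<dots> = 0"
    using power_sums by (intro sum.neutral) (auto simp: P_def coeff_pCons simp del: power_Suc split: nat.split)
  also have "(\<Sum>x\<in>X. w x * poly P x) = w x0 * poly P x0 + (\<Sum>x\<in>X - {x0}. w x * poly P x)"
    by (rule sum.remove[OF fin x0])
  also have "(\<Sum>x\<in>X - {x0}. w x * poly P x) = 0"
    using R_roots by (intro sum.neutral) (simp add: P_def)
  finally show ?thesis
    using R_roots x0 X_nonzero by (auto simp: P_def)
qed

lemma mem_A_set_iff_dvd:
  assumes "prime p" and "t > 0" and periodic: "(x :: 'a::field) ^ Q ^ t = x" and "x \<noteq> 0"
  shows "x \<in> A_set p Q t \<longleftrightarrow> p dvd t div frob_period Q x"
proof -
  define k where "k = frob_period Q x"
  have "k > 0" and "k dvd t"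
    using frob_period_pos[OF \<open>t > 0\<close> periodic] frob_period_dvd_iff[OF \<open>t > 0\<close> periodic] periodic
    by (simp_all add: k_def)
  then obtain a where t: "t = k * a" and a: "t div k = a"
    by auto
  show ?thesis
  proof (cases "p dvd t")
    case True
    have "x \<in> A_set p Q t \<longleftrightarrow> k dvd t div p"
      using True frob_period_dvd_iff[OF \<open>t > 0\<close> periodic, of "t div p"]
      by (simp add: A_set_def ffield_set_def k_def)
    also have "\<dots> \<longleftrightarrow> k * p dvd k * a"
      using True prime_gt_0_nat[OF \<open>prime p\<close>] by (simp add: dvd_div_iff_mult t)
    also have "\<dots> \<longleftrightarrow> p dvd a"
      using \<open>k > 0\<close> by simp
    finally show ?thesis
      using a by (simp add: k_def)
  next
    case False
    then show ?thesis
      using \<open>x \<noteq> 0\<close> a t by (auto simp: A_set_def k_def)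
  qed
qed

definition orbit_weight :: "nat \<Rightarrow> nat \<Rightarrow> 'a::field \<Rightarrow> 'a \<Rightarrow> 'a" where
  "orbit_weight Q m x y = (if y \<in> frob_orbit Q x then of_nat (m div frob_period Q x) else 0)"

text \<open>The coefficient of \<open>c\<^sub>i\<close> in the \<open>F_q\<close>-linear form
  \<open>\<Sum>c\<^sub>i x\<^sup>i \<mapsto> Tr(f(\<alpha>)) + \<epsilon> Tr(f(\<beta>))\<close>, the traces going down to \<open>F_Q\<close>.\<close>
definition trace_form_coeff :: "nat \<Rightarrow> nat \<Rightarrow> nat \<Rightarrow> 'a::field \<Rightarrow> 'a \<Rightarrow> int \<Rightarrow> nat \<Rightarrow> 'a" where
  "trace_form_coeff Q r s \<alpha> \<beta> \<epsilon> i = tr_Fp Q r (\<alpha> ^ i) + of_int \<epsilon> * tr_Fp Q s (\<beta> ^ i)"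

lemma int_mult_dvd_iff_dvd_div:
  assumes "k > 0" and "k dvd r" and "k dvd s"
  shows "int (p * k) dvd int r + \<epsilon> * int s \<longleftrightarrow> int p dvd int (r div k) + \<epsilon> * int (s div k)"
proof -
  have "int r + \<epsilon> * int s = (int (r div k) + \<epsilon> * int (s div k)) * int k"
    using assms by (simp add: algebra_simps of_nat_div)
  then show ?thesis
    using \<open>k > 0\<close> by simp
qed

context
  fixes p :: nat
  assumes CHAR_p: "CHAR('a::field) = p" and prime_p: "prime p"
begin

lemma mem_A_set_iff_orbit_weight_eq_0:
  assumes "t > 0" and "(x :: 'a) ^ Q ^ t = x" and "x \<noteq> 0"
  shows "x \<in> A_set p Q t \<longleftrightarrow> orbit_weight Q t x x = 0"
  using mem_A_set_iff_dvd[OF prime_p assms] frob_orbit_self[OF assms(1,2)]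
  by (simp add: orbit_weight_def of_nat_eq_0_iff_dvd[OF CHAR_p prime_p])

lemma tr_Fp_power_eq_weighted_sum:
  assumes "t > 0" and "(x :: 'a) ^ (p ^ n) ^ t = x" and "finite X" and "frob_orbit (p ^ n) x \<subseteq> X"
  shows "tr_Fp (p ^ n) t (x ^ i) = (\<Sum>y\<in>X. orbit_weight (p ^ n) t x y * y ^ i)"
proof -
  have "(\<Sum>y\<in>X. orbit_weight (p ^ n) t x y * y ^ i)
      = (\<Sum>y\<in>frob_orbit (p ^ n) x. of_nat (t div frob_period (p ^ n) x) * y ^ i)"
    using assms(3,4) by (intro sum.mono_neutral_cong_right) (auto simp: orbit_weight_def)
  also have "\<dots> = tr_Fp (p ^ n) t (x ^ i)"
    using tr_Fp_power_eq_orbit_sum[OF CHAR_p prime_p assms(1,2)] by (simp add: sum_distrib_left)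
  finally show ?thesis ..
qed

lemma trace_form_coeff_mult_p:
  assumes "\<epsilon> = 1 \<or> \<epsilon> = -1"
  shows "trace_form_coeff (p ^ n) r s \<alpha> \<beta> \<epsilon> (i * p) = trace_form_coeff (p ^ n) r s (\<alpha> :: 'a) \<beta> \<epsilon> i ^ p"
proof -
  have "(of_int \<epsilon> :: 'a) ^ p = of_int \<epsilon>"
    using ffield_set_of_int_sign[OF CHAR_p prime_p assms, of 1] by (simp add: ffield_set_def)
  then show ?thesis
    using frobenius_add[OF CHAR_p prime_p, of _ _ 1]
    by (simp add: trace_form_coeff_def tr_Fp_power_p[OF CHAR_p prime_p] power_mult_distrib power_mult)
qed

lemma trace_form_coeff_eq_0_of_coprime_eq_0:
  assumes "\<epsilon> = 1 \<or> \<epsilon> = -1"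
    and coprime_0: "\<And>i. 1 \<le> i \<Longrightarrow> i < d \<Longrightarrow> \<not> p dvd i \<Longrightarrow> trace_form_coeff (p ^ n) r s (\<alpha> :: 'a) \<beta> \<epsilon> i = 0"
  shows "1 \<le> i \<Longrightarrow> i < d \<Longrightarrow> trace_form_coeff (p ^ n) r s \<alpha> \<beta> \<epsilon> i = 0"
proof (induction i rule: less_induct)
  case (less i)
  show ?case
  proof (cases "p dvd i")
    case True
    then obtain j where i: "i = j * p"
      by (metis dvdE mult.commute)
    then have "1 \<le> j" and "j < i"
      using less.prems prime_gt_1_nat[OF prime_p] by (auto intro: Nat.gr0I)
    then have "trace_form_coeff (p ^ n) r s \<alpha> \<beta> \<epsilon> j = 0"
      using less by simp
    then show ?thesis
      using prime_gt_0_nat[OF prime_p] by (simp add: i trace_form_coeff_mult_p[OF assms(1)])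
  qed (use coprime_0 less.prems in simp)
qed

end

context
  fixes p n r s :: nat and \<alpha> \<beta> :: "'a::field" and g h :: "'a poly" and \<epsilon> :: int
  assumes CHAR_p: "CHAR('a) = p" and prime_p: "prime p" and sign: "\<epsilon> = 1 \<or> \<epsilon> = -1"
    and r_pos: "r > 0" and \<alpha>_periodic: "\<alpha> ^ (p ^ n) ^ r = \<alpha>" and \<alpha>_nonzero: "\<alpha> \<noteq> 0"
    and s_pos: "s > 0" and \<beta>_periodic: "\<beta> ^ (p ^ n) ^ s = \<beta>" and \<beta>_nonzero: "\<beta> \<noteq> 0"
    and g: "is_min_poly (ffield_set (p ^ n)) \<alpha> g" and h: "is_min_poly (ffield_set (p ^ n)) \<beta> h"
begin

abbreviation (input) "O\<^sub>\<alpha> \<equiv> frob_orbit (p ^ n) \<alpha>"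
abbreviation (input) "O\<^sub>\<beta> \<equiv> frob_orbit (p ^ n) \<beta>"
abbreviation (input) "weight y \<equiv> orbit_weight (p ^ n) r \<alpha> y + of_int \<epsilon> * orbit_weight (p ^ n) s \<beta> y"

lemma finite_frob_orbits: "finite (O\<^sub>\<alpha> \<union> O\<^sub>\<beta>)"
  by (simp add: frob_orbit_def)

lemma trace_form_coeff_eq_weighted_sum:
  "trace_form_coeff (p ^ n) r s \<alpha> \<beta> \<epsilon> i = (\<Sum>y\<in>O\<^sub>\<alpha> \<union> O\<^sub>\<beta>. weight y * y ^ i)"
  using tr_Fp_power_eq_weighted_sum[OF CHAR_p prime_p r_pos \<alpha>_periodic finite_frob_orbits Un_upper1, of i]
    tr_Fp_power_eq_weighted_sum[OF CHAR_p prime_p s_pos \<beta>_periodic finite_frob_orbits Un_upper2, of i]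
  by (simp add: trace_form_coeff_def sum_distrib_left sum.distrib distrib_right mult.assoc)

lemma min_poly_eq_imp_dvd_iff:
  assumes "g = h"
  shows "int (p * degree g) dvd int r + \<epsilon> * int s \<longleftrightarrow>
    (of_nat (r div frob_period (p ^ n) \<alpha>) + of_int \<epsilon> * of_nat (s div frob_period (p ^ n) \<beta>) :: 'a) = 0"
proof -
  define k where "k = degree g"
  have periods: "frob_period (p ^ n) \<alpha> = k" "frob_period (p ^ n) \<beta> = k"
    using degree_min_poly[OF CHAR_p prime_p r_pos \<alpha>_periodic g]
      degree_min_poly[OF CHAR_p prime_p s_pos \<beta>_periodic h] assms
    by (simp_all add: k_def)
  have "k > 0" "k dvd r" "k dvd s"
    using periods frob_period_pos[OF r_pos \<alpha>_periodic] frob_period_dvd_iff[OF r_pos \<alpha>_periodic]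
      frob_period_dvd_iff[OF s_pos \<beta>_periodic] \<alpha>_periodic \<beta>_periodic
    by auto
  then have "int (p * k) dvd int r + \<epsilon> * int s \<longleftrightarrow> int p dvd int (r div k) + \<epsilon> * int (s div k)"
    by (rule int_mult_dvd_iff_dvd_div)
  also have "\<dots> \<longleftrightarrow> (of_nat (r div k) + of_int \<epsilon> * of_nat (s div k) :: 'a) = 0"
    using of_int_eq_0_iff_dvd[OF CHAR_p prime_p, of "int (r div k) + \<epsilon> * int (s div k)"] by simp
  finally show ?thesis
    by (simp only: k_def periods)
qed

lemma weights_eq_0_iff:
  "(\<forall>y\<in>O\<^sub>\<alpha> \<union> O\<^sub>\<beta>. weight y = 0) \<longleftrightarrow>
     (g = h \<and> int (p * degree g) dvd int r + \<epsilon> * int s) \<or> (\<alpha> \<in> A_set p (p ^ n) r \<and> \<beta> \<in> A_set p (p ^ n) s)"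
proof -
  define a :: 'a where "a = of_nat (r div frob_period (p ^ n) \<alpha>)"
  define b :: 'a where "b = of_nat (s div frob_period (p ^ n) \<beta>)"
  have weight: "weight y = (if y \<in> O\<^sub>\<alpha> then a else 0) + (if y \<in> O\<^sub>\<beta> then of_int \<epsilon> * b else 0)" for y
    by (simp add: orbit_weight_def a_def b_def)
  have A_sets: "\<alpha> \<in> A_set p (p ^ n) r \<longleftrightarrow> a = 0" "\<beta> \<in> A_set p (p ^ n) s \<longleftrightarrow> b = 0"
    using mem_A_set_iff_orbit_weight_eq_0[OF CHAR_p prime_p r_pos \<alpha>_periodic \<alpha>_nonzero]
      mem_A_set_iff_orbit_weight_eq_0[OF CHAR_p prime_p s_pos \<beta>_periodic \<beta>_nonzero]
      frob_orbit_self[OF r_pos \<alpha>_periodic] frob_orbit_self[OF s_pos \<beta>_periodic]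
    by (simp_all add: orbit_weight_def a_def b_def)
  show ?thesis
  proof (cases "g = h")
    case True
    then have "O\<^sub>\<beta> = O\<^sub>\<alpha>"
      using min_poly_eq_iff_frob_orbit_eq[OF CHAR_p prime_p r_pos \<alpha>_periodic s_pos \<beta>_periodic g h] by simp
    then have "(\<forall>y\<in>O\<^sub>\<alpha> \<union> O\<^sub>\<beta>. weight y = 0) \<longleftrightarrow> a + of_int \<epsilon> * b = 0"
      using frob_orbit_self[OF r_pos \<alpha>_periodic] by (auto simp: weight)
    then show ?thesis
      using True min_poly_eq_imp_dvd_iff A_sets by (auto simp: a_def b_def)
  next
    case False
    have "O\<^sub>\<alpha> \<inter> O\<^sub>\<beta> = {}"
      by (rule frob_orbits_disjoint[OF CHAR_p prime_p r_pos \<alpha>_periodic s_pos \<beta>_periodic g h False])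
    then have "(\<forall>y\<in>O\<^sub>\<alpha> \<union> O\<^sub>\<beta>. weight y = 0) \<longleftrightarrow> a = 0 \<and> b = 0"
      using frob_orbit_self[OF r_pos \<alpha>_periodic] frob_orbit_self[OF s_pos \<beta>_periodic] sign
      by (auto simp: weight)
    then show ?thesis
      using False A_sets by auto
  qed
qed

lemma weights_eq_0_of_trace_form_coeff_eq_0:
  assumes low_coeffs: "\<And>i. 1 \<le> i \<Longrightarrow> i \<le> r + s \<Longrightarrow> trace_form_coeff (p ^ n) r s \<alpha> \<beta> \<epsilon> i = 0"
  shows "\<forall>y\<in>O\<^sub>\<alpha> \<union> O\<^sub>\<beta>. weight y = 0"
proof -
  have card_le: "card (O\<^sub>\<alpha> \<union> O\<^sub>\<beta>) \<le> r + s"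
    using card_Un_le[of "O\<^sub>\<alpha>" "O\<^sub>\<beta>"] card_frob_orbit[OF CHAR_p prime_p r_pos \<alpha>_periodic]
      card_frob_orbit[OF CHAR_p prime_p s_pos \<beta>_periodic]
      frob_period_le[OF r_pos \<alpha>_periodic] frob_period_le[OF s_pos \<beta>_periodic]
    by linarith
  have nonzero: "0 \<notin> O\<^sub>\<alpha> \<union> O\<^sub>\<beta>"
    using mem_frob_orbit_iff[OF r_pos \<alpha>_periodic] mem_frob_orbit_iff[OF s_pos \<beta>_periodic]
      \<alpha>_nonzero \<beta>_nonzero
    by auto
  have power_sums: "(\<Sum>y\<in>O\<^sub>\<alpha> \<union> O\<^sub>\<beta>. weight y * y ^ i) = 0"
    if "1 \<le> i" and "i \<le> card (O\<^sub>\<alpha> \<union> O\<^sub>\<beta>)" for i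
    using low_coeffs that card_le by (simp add: trace_form_coeff_eq_weighted_sum)
  show ?thesis
    using weights_eq_0_of_power_sums_eq_0[OF finite_frob_orbits nonzero power_sums] by blast
qed

lemma trace_form_coeff_eq_0_iff:
  "(\<forall>i. trace_form_coeff (p ^ n) r s \<alpha> \<beta> \<epsilon> i = 0) \<longleftrightarrow>
     (g = h \<and> int (p * degree g) dvd int r + \<epsilon> * int s) \<or> (\<alpha> \<in> A_set p (p ^ n) r \<and> \<beta> \<in> A_set p (p ^ n) s)"
  using weights_eq_0_of_trace_form_coeff_eq_0 weights_eq_0_iff
  by (auto simp: trace_form_coeff_eq_weighted_sum)

lemma trace_form_coeff_coprime_nonzero:
  assumes "r + s < d"
    and "\<not> ((g = h \<and> int (p * degree g) dvd int r + \<epsilon> * int s) \<or> (\<alpha> \<in> A_set p (p ^ n) r \<and> \<beta> \<in> A_set p (p ^ n) s))"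
  shows "\<exists>i. 1 \<le> i \<and> i < d \<and> \<not> p dvd i \<and> trace_form_coeff (p ^ n) r s \<alpha> \<beta> \<epsilon> i \<noteq> 0"
proof (rule ccontr)
  assume "\<not> ?thesis"
  then have coprime_coeffs:
    "\<And>i. 1 \<le> i \<Longrightarrow> i < d \<Longrightarrow> \<not> p dvd i \<Longrightarrow> trace_form_coeff (p ^ n) r s \<alpha> \<beta> \<epsilon> i = 0"
    by auto
  have "trace_form_coeff (p ^ n) r s \<alpha> \<beta> \<epsilon> i = 0" if "1 \<le> i" and "i \<le> r + s" for i
    using trace_form_coeff_eq_0_of_coprime_eq_0[OF CHAR_p prime_p sign coprime_coeffs] that assms(1)
    by simp
  then show False
    using weights_eq_0_of_trace_form_coeff_eq_0 weights_eq_0_iff assms(2) by blast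
qed

end

section \<open>Averaging over the family\<close>

lemma finite_Fam: "finite (Fam p Q d :: 'a::{field,finite} poly set)"
proof (rule finite_imageD)
  show "inj_on (\<lambda>f. restrict (coeff f) {..d}) (Fam p Q d :: 'a poly set)"
  proof (rule inj_onI, rule poly_eqI)
    fix f g :: "'a poly" and i
    assume f: "f \<in> Fam p Q d" and g: "g \<in> Fam p Q d"
      and eq: "restrict (coeff f) {..d} = restrict (coeff g) {..d}"
    show "coeff f i = coeff g i"
    proof (cases "i \<le> d")
      case True
      then show ?thesis
        using fun_cong[OF eq, of i] by simp
    next
      case False
      then show ?thesis
        using f g by (simp add: Fam_def coeff_eq_0)
    qed
  qed
  have "(\<lambda>f. restrict (coeff f) {..d}) ` (Fam p Q d :: 'a poly set) \<subseteq> PiE {..d} (\<lambda>_. UNIV)"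
    by (simp add: image_subset_iff)
  then show "finite ((\<lambda>f. restrict (coeff f) {..d}) ` (Fam p Q d :: 'a poly set))"
    by (rule finite_subset) (simp add: finite_PiE)
qed

lemma monom_in_Fam: "\<not> p dvd d \<Longrightarrow> Q > 0 \<Longrightarrow> monom 1 d \<in> Fam p Q d"
  by (auto simp: Fam_def coeff_monom degree_monom_eq ffield_set_0 ffield_set_1)

lemma card_Fam_pos: "\<not> p dvd d \<Longrightarrow> Q > 0 \<Longrightarrow> card (Fam p Q d :: 'a::{field,finite} poly set) > 0"
  using finite_Fam monom_in_Fam card_gt_0_iff by blast

context
  fixes p k :: nat
  assumes CHAR_p: "CHAR('a::field) = p" and prime_p: "prime p"
begin

lemma add_monom_in_Fam:
  assumes "f \<in> Fam p (p ^ k) d" and "(a :: 'a) \<in> ffield_set (p ^ k)" and "i < d" and "\<not> p dvd i"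
  shows "f + monom a i \<in> Fam p (p ^ k) d"
proof -
  have "coeff (f + monom a i) j \<in> ffield_set (p ^ k)" for j
    using assms prime_gt_0_nat[OF prime_p]
    by (auto simp: Fam_def coeff_monom ffield_set_0 intro: ffield_set_add[OF CHAR_p prime_p])
  moreover have "degree (monom a i) < degree f"
    using assms degree_monom_le[of a i] by (simp add: Fam_def)
  then have "degree (f + monom a i) = d"
    using assms(1) by (simp add: degree_add_eq_left Fam_def)
  ultimately show ?thesis
    using assms by (auto simp: Fam_def coeff_monom)
qed

lemma sum_Fam_shift:
  fixes \<Phi> :: "'a poly \<Rightarrow> 'b::comm_monoid_add"
  assumes "(a :: 'a) \<in> ffield_set (p ^ k)" and "i < d" and "\<not> p dvd i"
  shows "(\<Sum>f\<in>Fam p (p ^ k) d. \<Phi> (f + monom a i)) = (\<Sum>f\<in>Fam p (p ^ k) d. \<Phi> f)"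
proof (rule sum.reindex_bij_witness[of _ "\<lambda>f. f - monom a i" "\<lambda>f. f + monom a i"])
  fix f :: "'a poly" assume "f \<in> Fam p (p ^ k) d"
  then show "f - monom a i \<in> Fam p (p ^ k) d"
    using add_monom_in_Fam[where a = "- a"] assms ffield_set_diff[OF CHAR_p prime_p, of 0 k a]
      prime_gt_0_nat[OF prime_p]
    by (simp add: ffield_set_0 flip: minus_monom)
qed (use add_monom_in_Fam assms in auto)

end

context
  fixes p n N :: nat
  assumes CHAR_p: "CHAR('a::{field,finite}) = p" and prime_p: "prime p"
    and card_UNIV: "card (UNIV :: 'a set) = p ^ N" and n_dvd_N: "n dvd N" and n_pos: "n > 0"
begin

text \<open>Translating \<open>f\<close> by \<open>a x\<^sup>i\<^sup>0\<close> multiplies the sum by \<open>\<psi>(Tr(a u\<^sub>i\<^sub>0))\<close>;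
  summing over \<open>a \<in> F_q\<close> and using orthogonality shows that the sum vanishes.\<close>
lemma sum_Fam_char_linear_form_eq_0:
  assumes \<psi>: "nontriv_add_char p \<psi>" and u: "\<And>i. (u i :: 'a) \<in> ffield_set (p ^ n)"
    and i0: "i0 < d" "\<not> p dvd i0" "u i0 \<noteq> 0"
  shows "(\<Sum>f\<in>Fam p (p ^ n) d. \<psi> (\<Sum>i\<le>d. tr_Fp p n (coeff f i * u i))) = 0"
proof -
  define L where "L f = (\<Sum>i\<le>d. tr_Fp p n (coeff f i * u i))" for f :: "'a poly"
  define S where "S = (\<Sum>f\<in>Fam p (p ^ n) d. \<psi> (L f))"
  have L_in: "L f \<in> ffield_set p" if "f \<in> Fam p (p ^ n) d" for f
    using that u unfolding L_def Fam_def
    by (intro ffield_set_sum[OF CHAR_p prime_p, of _ _ 1, simplified] tr_Fp_in_prime_field[OF CHAR_p prime_p]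
        ffield_set_mult) auto
  have tr_in: "tr_Fp p n (a * u i0) \<in> ffield_set p" if "a \<in> ffield_set (p ^ n)" for a
    using that u by (intro tr_Fp_in_prime_field[OF CHAR_p prime_p] ffield_set_mult)
  have shift: "S * \<psi> (tr_Fp p n (a * u i0)) = S" if a: "a \<in> ffield_set (p ^ n)" for a
  proof -
    have "L (f + monom a i0) =
        (\<Sum>i\<le>d. tr_Fp p n (coeff f i * u i) + (if i = i0 then tr_Fp p n (a * u i0) else 0))" for f
      unfolding L_def using tr_Fp_add[OF CHAR_p prime_p, of 1] prime_gt_0_nat[OF prime_p]
      by (intro sum.cong refl) (simp add: coeff_monom distrib_right tr_Fp_0)
    then have "L (f + monom a i0) = L f + tr_Fp p n (a * u i0)" for f
      using i0(1) by (simp add: L_def sum.distrib)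
    then have "S = (\<Sum>f\<in>Fam p (p ^ n) d. \<psi> (L f) * \<psi> (tr_Fp p n (a * u i0)))"
      using sum_Fam_shift[OF CHAR_p prime_p a i0(1,2), of "\<lambda>f. \<psi> (L f)"] \<psi> L_in tr_in[OF a]
      by (simp add: S_def nontriv_add_char_def)
    also have "\<dots> = S * \<psi> (tr_Fp p n (a * u i0))"
      by (simp only: S_def sum_distrib_right)
    finally show ?thesis ..
  qed
  have "of_nat (card (ffield_set (p ^ n) :: 'a set)) * S = (\<Sum>a\<in>ffield_set (p ^ n). S * \<psi> (tr_Fp p n (a * u i0)))"
    by (simp add: sum.cong[OF refl shift])
  also have "\<dots> = 0"
    using sum_add_char_tr_Fp[OF CHAR_p prime_p card_UNIV n_dvd_N n_pos \<psi> u[of i0]] i0(3)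
    by (simp flip: sum_distrib_left)
  finally show ?thesis
    using ffield_set_0[of "p ^ n"] prime_gt_0_nat[OF prime_p] by (auto simp: S_def L_def)
qed

end

context
  fixes p :: nat
  assumes CHAR_p: "CHAR('a::field) = p" and prime_p: "prime p"
begin

lemma tr_Fp_poly_eq:
  assumes "\<forall>i. coeff f i \<in> ffield_set (p ^ n)"
  shows "tr_Fp p (n * r) (poly f (x :: 'a)) = (\<Sum>i\<le>degree f. tr_Fp p n (coeff f i * tr_Fp (p ^ n) r (x ^ i)))"
proof -
  have "tr_Fp p (n * r) (coeff f i * x ^ i) = tr_Fp p n (coeff f i * tr_Fp (p ^ n) r (x ^ i))" for i
    using tr_Fp_tower[OF CHAR_p prime_p, of 1 n r] tr_Fp_mult_left[of "coeff f i" "p ^ n"] assms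
    by (simp add: ffield_set_def)
  moreover have "tr_Fp p (n * r) (poly f x) = (\<Sum>i\<le>degree f. tr_Fp p (n * r) (coeff f i * x ^ i))"
    unfolding poly_altdef by (rule tr_Fp_sum[OF CHAR_p prime_p, of 1, unfolded power_one_right])
  ultimately show ?thesis
    by simp
qed

lemma tr_Fp_poly_eq_linear_form:
  assumes sign: "\<epsilon> = 1 \<or> \<epsilon> = -1" and "\<forall>i. coeff f i \<in> ffield_set (p ^ n)"
  shows "tr_Fp p (n * r) (poly f \<alpha>) + of_int \<epsilon> * tr_Fp p (n * s) (poly f (\<beta> :: 'a)) =
    (\<Sum>i\<le>degree f. tr_Fp p n (coeff f i * trace_form_coeff (p ^ n) r s \<alpha> \<beta> \<epsilon> i))"
proof -
  have sign_fix: "(of_int \<epsilon> :: 'a) ^ p = of_int \<epsilon>"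
    using ffield_set_of_int_sign[OF CHAR_p prime_p sign, of 1] by (simp add: ffield_set_def)
  have "tr_Fp p (n * r) (poly f \<alpha>) + of_int \<epsilon> * tr_Fp p (n * s) (poly f \<beta>) =
      (\<Sum>i\<le>degree f. tr_Fp p n (coeff f i * tr_Fp (p ^ n) r (\<alpha> ^ i)) +
        of_int \<epsilon> * tr_Fp p n (coeff f i * tr_Fp (p ^ n) s (\<beta> ^ i)))"
    using assms(2) by (simp add: tr_Fp_poly_eq sum_distrib_left sum.distrib)
  also have "\<dots> = (\<Sum>i\<le>degree f. tr_Fp p n (coeff f i * trace_form_coeff (p ^ n) r s \<alpha> \<beta> \<epsilon> i))"
    using tr_Fp_add[OF CHAR_p prime_p, of 1] tr_Fp_mult_left[OF sign_fix]
    by (simp add: trace_form_coeff_def distrib_left mult.left_commute[of _ "of_int \<epsilon>"])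
  finally show ?thesis .
qed

lemma trace_form_coeff_in_ffield_set:
  assumes "\<epsilon> = 1 \<or> \<epsilon> = -1" and "\<alpha> \<in> ffield_set ((p ^ n) ^ r)" and "(\<beta> :: 'a) \<in> ffield_set ((p ^ n) ^ s)"
  shows "trace_form_coeff (p ^ n) r s \<alpha> \<beta> \<epsilon> i \<in> ffield_set (p ^ n)"
  unfolding trace_form_coeff_def
  using ffield_set_power[OF assms(2), of i] ffield_set_power[OF assms(3), of i]
  by (intro ffield_set_add[OF CHAR_p prime_p] ffield_set_mult tr_Fp_in_ffield_set[OF CHAR_p prime_p]
      ffield_set_of_int_sign[OF CHAR_p prime_p assms(1)]) (simp_all add: ffield_set_def)

end

lemma average_trace_char_Fam:
  fixes \<psi> :: "'a::{field,finite} \<Rightarrow> complex" and \<epsilon> :: int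
  assumes prime_p: "prime p" and card_UNIV: "card (UNIV :: 'a set) = p ^ N" and "n dvd N" and "n > 0"
    and \<psi>: "nontriv_add_char p \<psi>" and "\<not> p dvd d" and sign: "\<epsilon> = 1 \<or> \<epsilon> = -1"
    and "r > 0" and "s > 0" and "r + s < d"
    and \<alpha>: "\<alpha> \<in> ffield_set ((p ^ n) ^ r)" "\<alpha> \<noteq> 0" and \<beta>: "\<beta> \<in> ffield_set ((p ^ n) ^ s)" "\<beta> \<noteq> 0"
    and g: "is_min_poly (ffield_set (p ^ n)) \<alpha> g" and h: "is_min_poly (ffield_set (p ^ n)) \<beta> h"
  shows "(\<Sum>f\<in>Fam p (p ^ n) d. \<psi> (tr_Fp p (n * r) (poly f \<alpha>) + of_int \<epsilon> * tr_Fp p (n * s) (poly f \<beta>)))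
           / of_nat (card (Fam p (p ^ n) d :: 'a poly set))
         = (if (g = h \<and> int (p * degree g) dvd int r + \<epsilon> * int s)
               \<or> (\<alpha> \<in> A_set p (p ^ n) r \<and> \<beta> \<in> A_set p (p ^ n) s) then 1 else 0)"
proof -
  have CHAR_p: "CHAR('a) = p"
    using CHAR_eq_of_card_eq_prime_power[OF prime_p card_UNIV] .
  have \<alpha>_periodic: "\<alpha> ^ (p ^ n) ^ r = \<alpha>" and \<beta>_periodic: "\<beta> ^ (p ^ n) ^ s = \<beta>"
    using \<alpha>(1) \<beta>(1) by (simp_all add: ffield_set_def)
  note trace_form_lemmas = trace_form_coeff_eq_0_iff trace_form_coeff_coprime_nonzero
  note trace_form = trace_form_lemmas[OF CHAR_p prime_p sign \<open>r > 0\<close> \<alpha>_periodic \<alpha>(2)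
      \<open>s > 0\<close> \<beta>_periodic \<beta>(2) g h]
  define u where "u = trace_form_coeff (p ^ n) r s \<alpha> \<beta> \<epsilon>"
  have sum_eq: "(\<Sum>f\<in>Fam p (p ^ n) d. \<psi> (tr_Fp p (n * r) (poly f \<alpha>) + of_int \<epsilon> * tr_Fp p (n * s) (poly f \<beta>)))
      = (\<Sum>f\<in>Fam p (p ^ n) d. \<psi> (\<Sum>i\<le>d. tr_Fp p n (coeff f i * u i)))"
    using tr_Fp_poly_eq_linear_form[OF CHAR_p prime_p sign] by (intro sum.cong refl) (simp add: Fam_def u_def)
  show ?thesis
  proof (cases "(g = h \<and> int (p * degree g) dvd int r + \<epsilon> * int s) \<or> (\<alpha> \<in> A_set p (p ^ n) r \<and> \<beta> \<in> A_set p (p ^ n) s)")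
    case True
    then have "u i = 0" for i
      using trace_form(1) by (simp add: u_def)
    then have "(\<Sum>f\<in>Fam p (p ^ n) d. \<psi> (\<Sum>i\<le>d. tr_Fp p n (coeff f i * u i)))
        = of_nat (card (Fam p (p ^ n) d :: 'a poly set))"
      using nontriv_add_char_0[OF \<psi>] prime_gt_0_nat[OF prime_p] by (simp add: tr_Fp_0)
    moreover have "card (Fam p (p ^ n) d :: 'a poly set) > 0"
      using \<open>\<not> p dvd d\<close> prime_gt_0_nat[OF prime_p] by (intro card_Fam_pos) simp_all
    ultimately show ?thesis
      using True by (simp add: sum_eq)
  next
    case False
    then obtain i0 where "i0 < d" "\<not> p dvd i0" "u i0 \<noteq> 0"
      using trace_form(2)[OF \<open>r + s < d\<close>] by (auto simp: u_def)
    then show ?thesis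
      using sum_Fam_char_linear_form_eq_0[OF CHAR_p prime_p card_UNIV \<open>n dvd N\<close> \<open>n > 0\<close> \<psi>]
        trace_form_coeff_in_ffield_set[OF CHAR_p prime_p sign \<alpha>(1) \<beta>(1)] False
      by (simp add: sum_eq u_def)
  qed
qed

theorem lemma7:
  fixes p n N d r s :: nat
    and \<psi> :: "'a::{field,finite} \<Rightarrow> complex"
    and \<alpha> \<beta> :: 'a and g h :: "'a poly"
  defines "q \<equiv> p ^ n"
  assumes "prime p" and "p > 2" and "n > 0"
    and "card (UNIV :: 'a set) = p ^ N" and "n * r dvd N" and "n * s dvd N"
    and "coprime d p"
    and "nontriv_add_char p \<psi>"
    and "r > 0" and "s > 0" and "r + s < d"
    and "\<alpha> \<in> ffield_set (q ^ r)" and "\<alpha> \<noteq> 0"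
    and "\<beta> \<in> ffield_set (q ^ s)" and "\<beta> \<noteq> 0"
    and "is_min_poly (ffield_set q) \<alpha> g" and "is_min_poly (ffield_set q) \<beta> h"
  shows "(\<Sum>f\<in>Fam p q d. \<psi> (tr_Fp p (n * r) (poly f \<alpha>) - tr_Fp p (n * s) (poly f \<beta>)))
           / of_nat (card (Fam p q d :: 'a poly set))
         = (if (g = h \<and> int (p * degree g) dvd int r - int s)
               \<or> (\<alpha> \<in> A_set p q r \<and> \<beta> \<in> A_set p q s) then 1 else 0) \<and>
         (\<Sum>f\<in>Fam p q d. \<psi> (tr_Fp p (n * r) (poly f \<alpha>) + tr_Fp p (n * s) (poly f \<beta>)))
           / of_nat (card (Fam p q d :: 'a poly set))
         = (if (g = h \<and> p * degree g dvd r + s)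
               \<or> (\<alpha> \<in> A_set p q r \<and> \<beta> \<in> A_set p q s) then 1 else 0)"
proof -
  have "\<not> p dvd d"
    using coprime_common_divisor[OF \<open>coprime d p\<close> _ dvd_refl] \<open>prime p\<close> not_prime_unit by blast
  note average = average_trace_char_Fam[OF \<open>prime p\<close> \<open>card UNIV = p ^ N\<close> dvd_mult_left[OF \<open>n * r dvd N\<close>]
      \<open>n > 0\<close> \<open>nontriv_add_char p \<psi>\<close> \<open>\<not> p dvd d\<close> _ \<open>r > 0\<close> \<open>s > 0\<close> \<open>r + s < d\<close>]
  have "int (p * degree g) dvd int r + 1 * int s \<longleftrightarrow> p * degree g dvd r + s"
    by (simp flip: of_nat_add of_nat_mult of_nat_dvd_iff)
  then show ?thesis
    using average[of "-1"] average[of 1] assms(13-) by (simp add: q_def)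
qed

end
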